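(* Let $(\|\cdot\|,\mathcal{P})$ be a sparsity structure on $\mathcal{E}$, let $B:\mathcal{X}\to\mathcal{E}$ be a linear bijection, and let $A:\mathcal{X}\to\mathbb{R}^n$ be linear. Assume $\bar P=I-P$ for every $P\in\mathcal{P}$. Then $\mathcal{C}_P=\mathcal{D}_P$ for every $P\in\mathcal{P}$, and for every $k\ge0$, $\mu_k(A)=\sigma_k(A)$, where $$\mathcal{C}_P=\bigcup_{x\in\mathcal{X}:\ PBx=Bx}\mathcal{T}(x),\qquad \mathcal{D}_P=\{z\in\mathcal{X}:\ \|\bar P Bz\|\le\|PBz\|\},$$ $$\mu_k(A)=\inf_{\substack{P\in\mathcal{P}_k,\ x\in\mathcal{X}\\ PBx=Bx}}\ \inf_{z\in\mathcal{T}(x),\,z\ne 0}\frac{\|Az\|_2}{\|z\|_2},\qquad \sigma_k(A)=\inf_{\substack{P\in\mathcal{P}_k,\ z\in\mathcal{X},\ z\neq 0\\ \|\bar PBz\|\le\|PBz\|}}\frac{\|Az\|_2}{\|z\|_2}.$$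
   Context: Sparsity structure: let $\mathcal{X},\mathcal{E}$ be finite-dimensional Euclidean spaces and $B:\mathcal{X}\to\mathcal{E}$ a linear map. A sparsity structure on $\mathcal{E}$ is a norm $\|\cdot\|$ on $\mathcal{E}$, with dual norm $\|\cdot\|_*$, together with a family $\mathcal{P}$ of linear maps $\mathcal{E}\to\mathcal{E}$ such that: (i) every $P\in\mathcal{P}$ is a projector, $P^2=P$; (ii) every $P\in\mathcal{P}$ is assigned a weight $\nu(P)\ge 0$ and a linear map $\bar P:\mathcal{E}\to\mathcal{E}$ with $P\bar P=0$; (iii) for every $P\in\mathcal{P}$ and all $f,g\in\mathcal{E}$, $\|P^*f+\bar P^*g\|_*\le\max(\|f\|_*,\|g\|_* )$, where $P^*$ and $\bar P^*$ denote adjoints. For $k\ge 0$, $\mathcal{P}_k=\{P\in\mathcal{P}:\nu(P)\le k\}$. Tangent cone: for $x\in\mathcal{X}$, $\mathcal{T}(x)=\{\lambda z:\ \lambda\ge 0,\ z\in\mathcal{X},\ \|Bx+Bz\|\le\|Bx\|\}$. $\|\cdot\|_2$ is the Euclidean norm. *)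

theory Defs
  imports "HOL-Analysis.Analysis"
begin

definition is_norm :: "('e::euclidean_space \<Rightarrow> real) \<Rightarrow> bool" where
  "is_norm nrm \<longleftrightarrow>
     (\<forall>v. 0 \<le> nrm v) \<and> (\<forall>v. nrm v = 0 \<longleftrightarrow> v = 0) \<and>
     (\<forall>c v. nrm (c *\<^sub>R v) = \<bar>c\<bar> * nrm v) \<and>
     (\<forall>v w. nrm (v + w) \<le> nrm v + nrm w)"

definition dual_norm :: "('e::euclidean_space \<Rightarrow> real) \<Rightarrow> 'e \<Rightarrow> real" where
  "dual_norm nrm f = Sup {f \<bullet> v | v. nrm v \<le> 1}"

definition sparsity_structure ::
  "('e::euclidean_space \<Rightarrow> real) \<Rightarrow> ('e \<Rightarrow> 'e) set \<Rightarrow> (('e \<Rightarrow> 'e) \<Rightarrow> real)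
   \<Rightarrow> (('e \<Rightarrow> 'e) \<Rightarrow> ('e \<Rightarrow> 'e)) \<Rightarrow> bool" where
  "sparsity_structure nrm Ps nu Pbar \<longleftrightarrow>
     is_norm nrm \<and>
     (\<forall>P\<in>Ps. linear P \<and> (\<forall>v. P (P v) = P v) \<and>
        0 \<le> nu P \<and> linear (Pbar P) \<and> (\<forall>v. P (Pbar P v) = 0) \<and>
        (\<forall>f g. dual_norm nrm (adjoint P f + adjoint (Pbar P) g)
                 \<le> max (dual_norm nrm f) (dual_norm nrm g)))"

definition tangent_cone ::
  "('e::euclidean_space \<Rightarrow> real) \<Rightarrow> ('x::euclidean_space \<Rightarrow> 'e) \<Rightarrow> 'x \<Rightarrow> 'x set" where
  "tangent_cone nrm B x = {l *\<^sub>R z | l z. 0 \<le> l \<and> nrm (B x + B z) \<le> nrm (B x)}"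

definition C_set ::
  "('e::euclidean_space \<Rightarrow> real) \<Rightarrow> ('x::euclidean_space \<Rightarrow> 'e) \<Rightarrow> ('e \<Rightarrow> 'e) \<Rightarrow> 'x set" where
  "C_set nrm B P = (\<Union>x\<in>{x. P (B x) = B x}. tangent_cone nrm B x)"

definition D_set ::
  "('e::euclidean_space \<Rightarrow> real) \<Rightarrow> ('x::euclidean_space \<Rightarrow> 'e) \<Rightarrow> ('e \<Rightarrow> 'e) \<Rightarrow> ('e \<Rightarrow> 'e) \<Rightarrow> 'x set" where
  "D_set nrm B P Pb = {z. nrm (Pb (B z)) \<le> nrm (P (B z))}"

text \<open>Infima are taken in the extended reals (inf of the empty set is +\<infinity>).\<close>
definition mu_k ::
  "('e::euclidean_space \<Rightarrow> real) \<Rightarrow> ('e \<Rightarrow> 'e) set \<Rightarrow> (('e \<Rightarrow> 'e) \<Rightarrow> real)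
   \<Rightarrow> ('x::euclidean_space \<Rightarrow> 'e) \<Rightarrow> ('x \<Rightarrow> real ^ 'n) \<Rightarrow> real \<Rightarrow> ereal" where
  "mu_k nrm Ps nu B A k =
     (INF P\<in>{P\<in>Ps. nu P \<le> k}. INF x\<in>{x. P (B x) = B x}.
        INF z\<in>tangent_cone nrm B x - {0}. ereal (norm (A z) / norm z))"

definition sigma_k ::
  "('e::euclidean_space \<Rightarrow> real) \<Rightarrow> ('e \<Rightarrow> 'e) set \<Rightarrow> (('e \<Rightarrow> 'e) \<Rightarrow> real)
   \<Rightarrow> (('e \<Rightarrow> 'e) \<Rightarrow> ('e \<Rightarrow> 'e)) \<Rightarrow> ('x::euclidean_space \<Rightarrow> 'e) \<Rightarrow> ('x \<Rightarrow> real ^ 'n)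
   \<Rightarrow> real \<Rightarrow> ereal" where
  "sigma_k nrm Ps nu Pbar B A k =
     (INF P\<in>{P\<in>Ps. nu P \<le> k}.
        INF z\<in>{z. z \<noteq> 0 \<and> nrm (Pbar P (B z)) \<le> nrm (P (B z))}. ereal (norm (A z) / norm z))"

end

theory Submission
  imports Defs
begin

text \<open>
  If \<open>P\<close> and \<open>I - P\<close> have the dual-norm splitting property, then norming functionals of
  \<open>u \<in> range P\<close> and \<open>w \<in> ker P\<close> glue to a functional of dual norm at most one, so
  \<open>\<parallel>u\<parallel> + \<parallel>w\<parallel> \<le> \<parallel>u + w\<parallel>\<close>.  For a descent direction \<open>z\<close> at \<open>x\<close> with \<open>PBx = Bx\<close>, applying
  this to \<open>u = Bx + PBz\<close> and \<open>w = (I - P)Bz\<close> and using \<open>\<parallel>Bx + Bz\<parallel> \<le> \<parallel>Bx\<parallel>\<close> gives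
  \<open>\<parallel>(I - P)Bz\<parallel> \<le> \<parallel>PBz\<parallel>\<close>.  Conversely every such \<open>z\<close> is a descent direction at the
  point \<open>x\<close> with \<open>Bx = -PBz\<close>.  Hence \<open>\<C>\<^sub>P = \<D>\<^sub>P\<close>, and the two infima range over the same sets.
\<close>

lemma is_norm_nonneg: "is_norm nrm \<Longrightarrow> 0 \<le> nrm v"
  unfolding is_norm_def by blast

lemma is_norm_zero [simp]: "is_norm nrm \<Longrightarrow> nrm 0 = 0"
  unfolding is_norm_def by blast

lemma is_norm_scaleR [simp]: "is_norm nrm \<Longrightarrow> nrm (c *\<^sub>R v) = \<bar>c\<bar> * nrm v"
  unfolding is_norm_def by blast

lemma is_norm_minus [simp]: "is_norm nrm \<Longrightarrow> nrm (- v) = nrm v"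
  using is_norm_scaleR[of nrm "-1" v] by simp

lemma is_norm_pos: "is_norm nrm \<Longrightarrow> v \<noteq> 0 \<Longrightarrow> 0 < nrm v"
  unfolding is_norm_def by (metis order_le_less)

lemma is_norm_triangle: "is_norm nrm \<Longrightarrow> nrm (v + w) \<le> nrm v + nrm w"
  unfolding is_norm_def by blast

lemma is_norm_convex_on: "is_norm nrm \<Longrightarrow> convex_on UNIV nrm"
proof (rule convex_onI)
  fix t :: real and x y assume n: "is_norm nrm" and t: "0 < t" "t < 1"
  have "nrm ((1 - t) *\<^sub>R x + t *\<^sub>R y) \<le> nrm ((1 - t) *\<^sub>R x) + nrm (t *\<^sub>R y)"
    using n by (rule is_norm_triangle)
  also have "\<dots> = (1 - t) * nrm x + t * nrm y"
    using n t by simp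
  finally show "nrm ((1 - t) *\<^sub>R x + t *\<^sub>R y) \<le> (1 - t) * nrm x + t * nrm y" .
qed simp

lemma convex_is_norm_strict_sublevel:
  assumes "is_norm nrm"
  shows "convex {v. nrm v < r}"
proof (rule convexI)
  fix x y and u v :: real
  assume "x \<in> {v. nrm v < r}" "y \<in> {v. nrm v < r}" "0 \<le> u" "0 \<le> v" "u + v = 1"
  moreover have "nrm (u *\<^sub>R x + v *\<^sub>R y) \<le> u * nrm x + v * nrm y"
    using convex_onD[OF is_norm_convex_on[OF assms], of v x y] \<open>0 \<le> u\<close> \<open>0 \<le> v\<close> \<open>u + v = 1\<close>
    by (simp add: eq_diff_eq[symmetric] add.commute)
  ultimately show "u *\<^sub>R x + v *\<^sub>R y \<in> {v. nrm v < r}"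
    using convex_bound_lt[of "nrm x" r "nrm y" u v] by simp
qed

lemma is_norm_ge_norm:
  fixes nrm :: "'e::euclidean_space \<Rightarrow> real"
  assumes n: "is_norm nrm"
  obtains m where "0 < m" "\<And>v. m * norm v \<le> nrm v"
proof -
  have "continuous_on (sphere (0::'e) 1) nrm"
    using convex_on_continuous[OF open_UNIV is_norm_convex_on[OF n]]
    by (rule continuous_on_subset) simp
  moreover have "sphere (0::'e) 1 \<noteq> {}"
    by simp
  ultimately obtain x where x: "x \<in> sphere 0 1" "\<And>y. y \<in> sphere (0::'e) 1 \<Longrightarrow> nrm x \<le> nrm y"
    using continuous_attains_inf[OF compact_sphere] by blast
  have "nrm x * norm v \<le> nrm v" for v
  proof (cases "v = 0")
    case False
    have "nrm x \<le> nrm ((1 / norm v) *\<^sub>R v)"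
      using x False by simp
    then show ?thesis
      using n False by (simp add: field_simps)
  qed (use n in simp)
  moreover have "0 < nrm x"
    using x(1) n by (auto intro: is_norm_pos)
  ultimately show thesis
    using that by blast
qed

lemma bdd_above_dual_norm_set:
  fixes nrm :: "'e::euclidean_space \<Rightarrow> real"
  assumes n: "is_norm nrm"
  shows "bdd_above {h \<bullet> v | v. nrm v \<le> 1}"
proof -
  obtain m where m: "0 < m" "\<And>v. m * norm v \<le> nrm v"
    using is_norm_ge_norm[OF n] by blast
  have "h \<bullet> v \<le> norm h * (1 / m)" if "nrm v \<le> 1" for v
  proof -
    have "norm v \<le> 1 / m"
      using m that by (simp add: field_simps) (metis mult.commute order_trans)
    then have "norm h * norm v \<le> norm h * (1 / m)"
      by (rule mult_left_mono) simp
    then show ?thesis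
      using norm_cauchy_schwarz[of h v] by linarith
  qed
  then show ?thesis
    by (intro bdd_aboveI[of _ "norm h * (1 / m)"]) blast
qed

lemma inner_le_dual_norm_mult:
  fixes nrm :: "'e::euclidean_space \<Rightarrow> real"
  assumes n: "is_norm nrm"
  shows "h \<bullet> y \<le> dual_norm nrm h * nrm y"
proof (cases "y = 0")
  case False
  have p: "0 < nrm y"
    using n False by (rule is_norm_pos)
  have "nrm ((1 / nrm y) *\<^sub>R y) \<le> 1"
    using n p by simp
  then have "h \<bullet> ((1 / nrm y) *\<^sub>R y) \<in> {h \<bullet> v | v. nrm v \<le> 1}"
    by blast
  then have "h \<bullet> ((1 / nrm y) *\<^sub>R y) \<le> dual_norm nrm h"
    unfolding dual_norm_def using bdd_above_dual_norm_set[OF n] by (rule cSup_upper)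
  then show ?thesis
    using p by (simp add: field_simps)
qed (use n in simp)

lemma dual_norm_le_one:
  fixes nrm :: "'e::euclidean_space \<Rightarrow> real"
  assumes n: "is_norm nrm" and f: "\<And>v. f \<bullet> v \<le> nrm v"
  shows "dual_norm nrm f \<le> 1"
  unfolding dual_norm_def
proof (rule cSup_least)
  have "f \<bullet> 0 \<in> {f \<bullet> v |v. nrm v \<le> 1}"
    using n by (intro CollectI exI[of _ 0]) simp
  then show "{f \<bullet> v |v. nrm v \<le> 1} \<noteq> {}"
    by blast
qed (use f in \<open>blast intro: order_trans\<close>)

lemma inner_bound_of_strict_sublevel_bound:
  assumes n: "is_norm nrm" and y: "0 < nrm y"
    and bound: "\<And>w. nrm w < nrm y \<Longrightarrow> a \<bullet> w \<le> b"
  shows "nrm y * (a \<bullet> v) \<le> b * nrm v"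
proof (cases "v = 0")
  case False
  have nv: "0 < nrm v"
    using n False by (rule is_norm_pos)
  show ?thesis
  proof (rule field_le_mult_one_interval)
    fix s :: real assume s: "0 < s" "s < 1"
    have "nrm ((s * nrm y / nrm v) *\<^sub>R v) = s * nrm y"
      using n nv s y by simp
    then have "a \<bullet> ((s * nrm y / nrm v) *\<^sub>R v) \<le> b"
      using s y by (intro bound) simp
    then show "s * (nrm y * (a \<bullet> v)) \<le> b * nrm v"
      using nv by (simp add: pos_divide_le_eq algebra_simps)
  qed
qed (use n in simp)

lemma is_norm_supporting_functional:
  fixes nrm :: "'e::euclidean_space \<Rightarrow> real"
  assumes n: "is_norm nrm"
  obtains f where "\<And>v. f \<bullet> v \<le> nrm v" "f \<bullet> y = nrm y"
proof (cases "y = 0")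
  case True
  then show thesis
    using that[of 0] n by (simp add: is_norm_nonneg)
next
  case False
  have p: "0 < nrm y"
    using n False by (rule is_norm_pos)
  let ?S = "{v. nrm v < nrm y}"
  have "0 \<in> ?S"
    using n p by simp
  then obtain a b where a: "a \<noteq> 0" and below: "\<And>w. w \<in> ?S \<Longrightarrow> a \<bullet> w \<le> b" and "b \<le> a \<bullet> y"
    using separating_hyperplane_sets[OF convex_is_norm_strict_sublevel[OF n, of "nrm y"] convex_singleton, of y]
    by auto
  have "0 < nrm a"
    using n a by (rule is_norm_pos)
  then have "(nrm y / (2 * nrm a)) *\<^sub>R a \<in> ?S" and "0 < a \<bullet> ((nrm y / (2 * nrm a)) *\<^sub>R a)"
    using n p a by simp_all
  then have b: "0 < b"
    using below by fastforce
  define f where "f = (nrm y / b) *\<^sub>R a"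
  have f_le: "f \<bullet> v \<le> nrm v" for v
    using inner_bound_of_strict_sublevel_bound[OF n p below, of v] b
    unfolding f_def by (simp add: field_simps)
  moreover have "nrm y \<le> f \<bullet> y"
    using \<open>b \<le> a \<bullet> y\<close> b p unfolding f_def by (simp add: field_simps mult_left_mono)
  ultimately show thesis
    using that[of f] f_le[of y] by simp
qed

lemma is_norm_norming_functional:
  fixes nrm :: "'e::euclidean_space \<Rightarrow> real"
  assumes n: "is_norm nrm"
  obtains f where "dual_norm nrm f \<le> 1" "f \<bullet> y = nrm y"
proof -
  obtain f where "\<And>v. f \<bullet> v \<le> nrm v" "f \<bullet> y = nrm y"
    using is_norm_supporting_functional[OF n] by blast
  then show thesis
    using that dual_norm_le_one[OF n] by blast
qed

definition dual_norm_splits ::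
  "('e::euclidean_space \<Rightarrow> real) \<Rightarrow> ('e \<Rightarrow> 'e) \<Rightarrow> ('e \<Rightarrow> 'e) \<Rightarrow> bool" where
  "dual_norm_splits nrm P Q \<longleftrightarrow>
     (\<forall>f g. dual_norm nrm (adjoint P f + adjoint Q g) \<le> max (dual_norm nrm f) (dual_norm nrm g))"

lemma is_norm_add_ge_of_dual_norm_splits:
  fixes nrm :: "'e::euclidean_space \<Rightarrow> real"
  assumes n: "is_norm nrm" and split: "dual_norm_splits nrm P Q"
    and lP: "linear P" and lQ: "linear Q"
    and "P u = u" "Q u = 0" "P w = 0" "Q w = w"
  shows "nrm u + nrm w \<le> nrm (u + w)"
proof -
  obtain f where f: "dual_norm nrm f \<le> 1" "f \<bullet> u = nrm u"
    using is_norm_norming_functional[OF n] by blast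
  obtain g where g: "dual_norm nrm g \<le> 1" "g \<bullet> w = nrm w"
    using is_norm_norming_functional[OF n] by blast
  define h where "h = adjoint P f + adjoint Q g"
  have "dual_norm nrm h \<le> 1"
    using split f g unfolding dual_norm_splits_def h_def by (metis max.bounded_iff order_trans)
  have "nrm u + nrm w = P (u + w) \<bullet> f + Q (u + w) \<bullet> g"
    using f g assms(5-8) by (simp add: linear_add[OF lP] linear_add[OF lQ] inner_commute)
  also have "\<dots> = h \<bullet> (u + w)"
    unfolding h_def adjoint_works[OF lP, symmetric] adjoint_works[OF lQ, symmetric]
    by (simp add: inner_commute inner_add_left inner_add_right)
  also have "\<dots> \<le> dual_norm nrm h * nrm (u + w)"
    using n by (rule inner_le_dual_norm_mult)
  also have "\<dots> \<le> nrm (u + w)"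
    using mult_right_mono[OF \<open>dual_norm nrm h \<le> 1\<close> is_norm_nonneg[OF n]] by simp
  finally show ?thesis .
qed

lemma complement_le_of_descent:
  fixes nrm :: "'e::euclidean_space \<Rightarrow> real"
  assumes n: "is_norm nrm" and split: "dual_norm_splits nrm P (\<lambda>v. v - P v)"
    and lP: "linear P" and idem: "\<And>v. P (P v) = P v"
    and u: "P u = u" and descent: "nrm (u + v) \<le> nrm u"
  shows "nrm (v - P v) \<le> nrm (P v)"
proof -
  have lQ: "linear (\<lambda>v. v - P v)"
    using lP by (simp add: linear_compose_sub linear_id[unfolded id_def])
  have "nrm (u + P v) + nrm (v - P v) \<le> nrm (u + P v + (v - P v))"
    using n split lP lQ by (rule is_norm_add_ge_of_dual_norm_splits)
      (simp_all add: u idem linear_add[OF lP] linear_diff[OF lP])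
  moreover have "nrm u \<le> nrm (u + P v) + nrm (P v)"
    using is_norm_triangle[OF n, of "u + P v" "- P v"] n by simp
  ultimately show ?thesis
    using descent by simp
qed

lemma C_set_subset_D_set:
  fixes nrm :: "'e::euclidean_space \<Rightarrow> real"
  assumes n: "is_norm nrm" and split: "dual_norm_splits nrm P (\<lambda>v. v - P v)"
    and lP: "linear P" and idem: "\<And>v. P (P v) = P v" and lB: "linear B"
  shows "C_set nrm B P \<subseteq> D_set nrm B P (\<lambda>v. v - P v)"
proof
  fix z assume "z \<in> C_set nrm B P"
  then obtain x l w where x: "P (B x) = B x" and z: "z = l *\<^sub>R w" "0 \<le> l"
    and descent: "nrm (B x + B w) \<le> nrm (B x)"
    unfolding C_set_def tangent_cone_def by blast
  have "nrm (B w - P (B w)) \<le> nrm (P (B w))"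
    using complement_le_of_descent[OF n split lP idem x descent] .
  then have "l * nrm (B w - P (B w)) \<le> l * nrm (P (B w))"
    using \<open>0 \<le> l\<close> by (rule mult_left_mono)
  then show "z \<in> D_set nrm B P (\<lambda>v. v - P v)"
    using n \<open>0 \<le> l\<close> unfolding D_set_def z
    by (simp add: linear_scale[OF lB] linear_scale[OF lP] scaleR_diff_right[symmetric])
qed

lemma D_set_subset_C_set:
  fixes nrm :: "'e::euclidean_space \<Rightarrow> real"
  assumes n: "is_norm nrm" and lP: "linear P" and idem: "\<And>v. P (P v) = P v"
    and sB: "surj B"
  shows "D_set nrm B P (\<lambda>v. v - P v) \<subseteq> C_set nrm B P"
proof
  fix z assume "z \<in> D_set nrm B P (\<lambda>v. v - P v)"
  then have zD: "nrm (B z - P (B z)) \<le> nrm (P (B z))"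
    unfolding D_set_def by simp
  obtain x where Bx: "B x = - P (B z)"
    using sB by (metis surjD)
  have "P (B x) = B x"
    using Bx idem by (simp add: linear_neg[OF lP])
  moreover have "nrm (B x + B z) \<le> nrm (B x)"
    using zD Bx n by (simp add: add.commute)
  then have "z \<in> tangent_cone nrm B x"
    unfolding tangent_cone_def by (intro CollectI exI[of _ 1] exI[of _ z]) simp
  ultimately show "z \<in> C_set nrm B P"
    unfolding C_set_def by blast
qed

lemma INF_UNION:
  "(INF x\<in>(\<Union>y\<in>A. g y). f x) = (INF y\<in>A. INF x\<in>g y. f x :: 'a::complete_lattice)"
  by (rule order_antisym) (blast intro: INF_greatest INF_lower2)+

lemma mu_k_eq_sigma_k_if_C_set_eq_D_set:
  assumes "\<And>P. P \<in> Ps \<Longrightarrow> C_set nrm B P = D_set nrm B P (Pbar P)"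
  shows "mu_k nrm Ps nu B A k = sigma_k nrm Ps nu Pbar B A k"
  unfolding mu_k_def sigma_k_def
proof (rule INF_cong[OF refl])
  fix P assume "P \<in> {P \<in> Ps. nu P \<le> k}"
  then have "(\<Union>x\<in>{x. P (B x) = B x}. tangent_cone nrm B x - {0})
      = {z. z \<noteq> 0 \<and> nrm (Pbar P (B z)) \<le> nrm (P (B z))}"
    using assms[of P] unfolding C_set_def D_set_def by blast
  then show "(INF x\<in>{x. P (B x) = B x}. INF z\<in>tangent_cone nrm B x - {0}. ereal (norm (A z) / norm z))
      = (INF z\<in>{z. z \<noteq> 0 \<and> nrm (Pbar P (B z)) \<le> nrm (P (B z))}. ereal (norm (A z) / norm z))"
    by (simp flip: INF_UNION)
qed

theorem lemma7:
  fixes nrm :: "'e::euclidean_space \<Rightarrow> real"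
    and Ps :: "('e \<Rightarrow> 'e) set"
    and nu :: "('e \<Rightarrow> 'e) \<Rightarrow> real"
    and Pbar :: "('e \<Rightarrow> 'e) \<Rightarrow> ('e \<Rightarrow> 'e)"
    and B :: "'x::euclidean_space \<Rightarrow> 'e"
    and A :: "'x \<Rightarrow> real ^ 'n"
  assumes "sparsity_structure nrm Ps nu Pbar"
    and "linear B" and "bij B"
    and "linear A"
    and "\<forall>P\<in>Ps. Pbar P = (\<lambda>v. v - P v)"
  shows "(\<forall>P\<in>Ps. C_set nrm B P = D_set nrm B P (Pbar P)) \<and>
         (\<forall>k::real. 0 \<le> k \<longrightarrow> mu_k nrm Ps nu B A k = sigma_k nrm Ps nu Pbar B A k)"
proof -
  have CD: "C_set nrm B P = D_set nrm B P (Pbar P)" if "P \<in> Ps" for P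
  proof -
    have n: "is_norm nrm" and lP: "linear P" and idem: "\<And>v. P (P v) = P v"
      and split: "dual_norm_splits nrm P (\<lambda>v. v - P v)"
      using assms(1,5) that unfolding sparsity_structure_def dual_norm_splits_def by auto
    show ?thesis
      using C_set_subset_D_set[OF n split lP idem assms(2)]
        D_set_subset_C_set[OF n lP idem bij_is_surj[OF assms(3)]] assms(5) that
      by auto
  qed
  then show ?thesis
    using mu_k_eq_sigma_k_if_C_set_eq_D_set by blast
qed

end
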